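(* Let $C_{\log}>0$, let $\gamma,\gamma'\in\mathbb{R}^d_{>0}$ with $\gamma'_i\ge\gamma_i$ for all $i\in[d]$, let $L,L'\in\mathbb{R}^d_{>0}$, and let $\psi:\mathbb{R}_{>0}\to\mathbb{R}$ be a twice differentiable convex function such that $\frac{\psi''(x)}{4}\le\psi''(z)\le4\psi''(x)$ for all $x>0$ and $z\in[x/2,2x]$. Define $\phi(p)=\sum_{i\in[d]}\gamma_i\psi(p_i)$, $\phi'(p)=\sum_{i\in[d]}\gamma'_i\psi(p_i)$, $\phi_L(p)=-C_{\log}\sum_{i\in[d]}\log p_i$, $F(p)=\langle p,L\rangle+\phi(p)+\phi_L(p)$ and $F'(p)=\langle p,L'\rangle+\phi'(p)+\phi_L(p)$. Let $\Omega\subseteq\mathbb{R}^d_{>0}$ be convex, and let $x=\arg\min_{p\in\Omega}F(p)$, $y=\arg\min_{p\in\Omega}F'(p)$. If $$C_{\log}\ge\max\Big\{9,\ 32\sum_{i\in[d]}(L'_i-L_i)^2x_i^2,\ 32\sum_{i\in[d]}(\gamma'_i-\gamma_i)^2\psi'(x_i)^2x_i^2\Big\},$$ then $\frac12x_i\le y_i\le2x_i$ for all $i\in[d]$. *)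

theory Defs
  imports "HOL-Analysis.Analysis"
begin

definition reg_phi :: "(real^'d) \<Rightarrow> (real \<Rightarrow> real) \<Rightarrow> (real^'d) \<Rightarrow> real" where
  "reg_phi \<gamma> \<psi> p = (\<Sum>i\<in>UNIV. \<gamma>$i * \<psi> (p$i))"

definition log_barrier :: "real \<Rightarrow> (real^'d) \<Rightarrow> real" where
  "log_barrier C p = - C * (\<Sum>i\<in>UNIV. ln (p$i))"

definition objF :: "(real^'d) \<Rightarrow> (real^'d) \<Rightarrow> (real \<Rightarrow> real) \<Rightarrow> real \<Rightarrow> (real^'d) \<Rightarrow> real" where
  "objF L \<gamma> \<psi> C p = (\<Sum>i\<in>UNIV. p$i * L$i) + reg_phi \<gamma> \<psi> p + log_barrier C p"

definition is_argmin :: "('a \<Rightarrow> real) \<Rightarrow> 'a set \<Rightarrow> 'a \<Rightarrow> bool" where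
  "is_argmin F \<Omega> x \<longleftrightarrow> x \<in> \<Omega> \<and> (\<forall>p\<in>\<Omega>. F x \<le> F p)"

end

theory Submission
  imports Defs
begin

text \<open>
  Write \<open>r\<^sub>i = y\<^sub>i / x\<^sub>i\<close>. First-order optimality of \<open>x\<close> for \<open>F\<close> on the convex set \<open>\<Omega>\<close> gives
  \<open>\<langle>\<nabla>F(x), y - x\<rangle> \<ge> 0\<close>. Convexity of \<open>\<psi>\<close>, together with the exact expansion of the
  log-barrier, gives \<open>F'(y) \<ge> F'(x) + \<langle>\<nabla>F'(x), y - x\<rangle> + C \<Sum>\<^sub>i (r\<^sub>i - 1 - ln r\<^sub>i)\<close>.
  Since \<open>F'(y) \<le> F'(x)\<close> and \<open>(\<nabla>F'(x) - \<nabla>F(x))\<^sub>i (y\<^sub>i - x\<^sub>i) = a\<^sub>i (r\<^sub>i - 1)\<close> with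
  \<open>a\<^sub>i = x\<^sub>i ((L'\<^sub>i - L\<^sub>i) + (\<gamma>'\<^sub>i - \<gamma>\<^sub>i) \<psi>'(x\<^sub>i))\<close>, this yields
  \<open>C \<Sum>\<^sub>i (r\<^sub>i - 1 - ln r\<^sub>i) \<le> -\<Sum>\<^sub>i a\<^sub>i (r\<^sub>i - 1)\<close>.
  With \<open>m = max\<^sub>i |r\<^sub>i - 1|\<close> and \<open>Q = \<Sum>\<^sub>i (r\<^sub>i - 1)\<^sup>2\<close>, the left side is at least
  \<open>C Q / (2(1 + m))\<close>, while by Cauchy-Schwarz and the hypothesis on \<open>C\<close> the right side is at most
  \<open>sqrt (C Q / 8)\<close>. Hence \<open>C Q \<le> (1 + m)\<^sup>2 / 2\<close>, and \<open>C \<ge> 9\<close>, \<open>Q \<ge> m\<^sup>2\<close> force \<open>m \<le> 1/2\<close>.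
\<close>

lemma ln_le_minus_one_minus_sq:
  fixes r :: real
  assumes r: "0 < r"
  shows "ln r \<le> r - 1 - (r - 1)^2 / (2 * (1 + \<bar>r - 1\<bar>))"
proof (cases "1 \<le> r")
  case True
  have "(\<lambda>s. s - 1/s - 2 * ln s) 1 \<le> (\<lambda>s. s - 1/s - 2 * ln s) r"
  proof (rule DERIV_nonneg_imp_nondecreasing[OF True])
    fix s :: real assume s: "1 \<le> s"
    show "\<exists>D. ((\<lambda>s. s - 1/s - 2 * ln s) has_real_derivative D) (at s) \<and> 0 \<le> D"
    proof (intro exI conjI)
      show "((\<lambda>s. s - 1/s - 2 * ln s) has_real_derivative (1 - 1/s)^2) (at s)"
        using s by (auto intro!: derivative_eq_intros simp: field_simps power2_eq_square)
    qed simp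
  qed
  then have "ln r \<le> (r - 1/r) / 2" by simp
  also have "\<dots> = r - 1 - (r - 1)^2 / (2 * (1 + \<bar>r - 1\<bar>))"
    using True by (simp add: field_simps power2_eq_square)
  finally show ?thesis .
next
  case False
  have "(\<lambda>s. s - 1 - ln s - (s - 1)^2 / 2) 1 \<le> (\<lambda>s. s - 1 - ln s - (s - 1)^2 / 2) r"
  proof (rule DERIV_nonpos_imp_nonincreasing[of r 1 "\<lambda>s. s - 1 - ln s - (s - 1)^2 / 2"])
    fix s :: real assume "r \<le> s" "s \<le> 1"
    then have s: "0 < s" using r by auto
    show "\<exists>D. ((\<lambda>s. s - 1 - ln s - (s - 1)^2 / 2) has_real_derivative D) (at s) \<and> D \<le> 0"
    proof (intro exI conjI)
      show "((\<lambda>s. s - 1 - ln s - (s - 1)^2 / 2) has_real_derivative - ((s - 1)^2 / s)) (at s)"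
        using s by (auto intro!: derivative_eq_intros simp: field_simps power2_eq_square)
    qed (use s in simp)
  qed (use False in simp)
  then have "ln r \<le> r - 1 - (r - 1)^2 / 2" by simp
  moreover have "(r - 1)^2 / (2 * (1 + \<bar>r - 1\<bar>)) \<le> (r - 1)^2 / 2"
    by (intro divide_left_mono) (auto simp: add_pos_nonneg)
  ultimately show ?thesis by linarith
qed

lemma sum_power2_add_le:
  fixes p q :: "'i \<Rightarrow> 'a::linordered_idom"
  shows "(\<Sum>i\<in>I. (p i + q i)^2) \<le> 2 * (\<Sum>i\<in>I. (p i)^2) + 2 * (\<Sum>i\<in>I. (q i)^2)"
proof -
  have "(p i + q i)^2 \<le> 2 * (p i)^2 + 2 * (q i)^2" for i
    using zero_le_power2[of "p i - q i"] by (simp add: power2_eq_square algebra_simps)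
  then show ?thesis
    by (simp add: sum_distrib_left sum.distrib[symmetric] sum_mono)
qed

lemma sum_log_gap_ge_sum_power2:
  fixes r :: "'i \<Rightarrow> real"
  assumes r_pos: "\<And>i. i \<in> I \<Longrightarrow> 0 < r i" and dev_le: "\<And>i. i \<in> I \<Longrightarrow> \<bar>r i - 1\<bar> \<le> m"
  shows "(\<Sum>i\<in>I. (r i - 1)^2) / (2 * (1 + m)) \<le> (\<Sum>i\<in>I. r i - 1 - ln (r i))"
  unfolding sum_divide_distrib
proof (rule sum_mono)
  fix i assume "i \<in> I"
  have "(r i - 1)^2 / (2 * (1 + m)) \<le> (r i - 1)^2 / (2 * (1 + \<bar>r i - 1\<bar>))"
    using dev_le[OF \<open>i \<in> I\<close>] by (intro divide_left_mono mult_pos_pos) (auto simp: add_pos_nonneg)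
  also have "\<dots> \<le> r i - 1 - ln (r i)"
    using ln_le_minus_one_minus_sq[OF r_pos[OF \<open>i \<in> I\<close>]] by (simp add: algebra_simps)
  finally show "(r i - 1)^2 / (2 * (1 + m)) \<le> r i - 1 - ln (r i)" .
qed

lemma le_half_of_square_bounds:
  fixes m s :: real
  assumes "0 \<le> m" and s_ge: "9 * m^2 \<le> s" and s_le: "(s / (2 * (1 + m)))^2 \<le> s / 8"
  shows "m \<le> 1/2"
proof -
  have "s^2 = (s / (2 * (1 + m)))^2 * (2 * (1 + m))^2"
    using \<open>0 \<le> m\<close> by (simp add: field_simps)
  also have "\<dots> \<le> s / 8 * (2 * (1 + m))^2"
    using s_le by (rule mult_right_mono) simp
  also have "\<dots> = s * ((1 + m)^2 / 2)"
    by (simp add: power2_eq_square algebra_simps)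
  finally have "s * s \<le> s * ((1 + m)^2 / 2)"
    by (simp add: power2_eq_square)
  moreover have "0 < s \<or> s \<le> 0" by linarith
  ultimately have "s \<le> (1 + m)^2 / 2"
    by (auto simp: mult_le_cancel_left_pos intro: order_trans[OF _ zero_le_power2])
  with s_ge have "18 * m^2 \<le> (1 + m)^2" by simp
  show "m \<le> 1/2"
  proof (rule ccontr)
    assume "\<not> m \<le> 1/2"
    then have "(1 + m)^2 < (3 * m)^2" by (intro power_strict_mono) auto
    with \<open>18 * m^2 \<le> (1 + m)^2\<close> show False
      using zero_le_power2[of m] by (simp add: power_mult_distrib)
  qed
qed

lemma ratios_near_one_of_log_gap_bound:
  fixes r a :: "'i::finite \<Rightarrow> real"
  assumes r_pos: "\<And>i. 0 < r i" and C_ge_9: "9 \<le> C"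
    and a_small: "8 * (\<Sum>i\<in>UNIV. (a i)^2) \<le> C"
    and gap: "C * (\<Sum>i\<in>UNIV. r i - 1 - ln (r i)) \<le> - (\<Sum>i\<in>UNIV. a i * (r i - 1))"
  shows "\<bar>r i - 1\<bar> \<le> 1/2"
proof -
  define m where "m = Max (range (\<lambda>i. \<bar>r i - 1\<bar>))"
  define Q where "Q = (\<Sum>i\<in>UNIV. (r i - 1)^2)"
  have dev_le_m: "\<bar>r i - 1\<bar> \<le> m" for i
    unfolding m_def by (rule Max_ge) auto
  have "m \<in> range (\<lambda>i. \<bar>r i - 1\<bar>)"
    unfolding m_def by (rule Max_in) auto
  then obtain j where j: "\<bar>r j - 1\<bar> = m" by auto
  then have "0 \<le> m" by auto
  have "(r j - 1)^2 \<le> Q"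
    unfolding Q_def by (rule member_le_sum) auto
  with j have "m^2 \<le> Q" by (metis power2_abs)
  have "Q / (2 * (1 + m)) \<le> (\<Sum>i\<in>UNIV. r i - 1 - ln (r i))"
    unfolding Q_def using r_pos dev_le_m by (rule sum_log_gap_ge_sum_power2)
  then have "C * (Q / (2 * (1 + m))) \<le> - (\<Sum>i\<in>UNIV. a i * (r i - 1))"
    using gap C_ge_9 mult_left_mono[of _ _ C] by (meson order.trans zero_le_numeral)
  moreover have "0 \<le> C * (Q / (2 * (1 + m)))"
    using C_ge_9 \<open>0 \<le> m\<close> unfolding Q_def by (intro mult_nonneg_nonneg divide_nonneg_pos sum_nonneg) auto
  ultimately have "(C * (Q / (2 * (1 + m))))^2 \<le> (- (\<Sum>i\<in>UNIV. a i * (r i - 1)))^2"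
    by (rule power_mono)
  also have "\<dots> \<le> (\<Sum>i\<in>UNIV. (a i)^2) * Q"
    unfolding Q_def power2_minus by (rule Cauchy_Schwarz_ineq_sum)
  also have "\<dots> \<le> C / 8 * Q"
    using a_small unfolding Q_def by (intro mult_right_mono) (auto intro!: sum_nonneg)
  finally have "(C * Q / (2 * (1 + m)))^2 \<le> C * Q / 8" by simp
  moreover have "9 * m^2 \<le> C * Q"
    using C_ge_9 \<open>m^2 \<le> Q\<close> by (intro mult_mono) auto
  ultimately have "m \<le> 1/2"
    using \<open>0 \<le> m\<close> le_half_of_square_bounds by blast
  with dev_le_m show ?thesis by (rule order_trans)
qed

lemma is_argmin_convex_imp_deriv_nonneg:
  fixes F :: "'a::real_vector \<Rightarrow> real"
  assumes x_min: "is_argmin F \<Omega> x" and "convex \<Omega>" and "y \<in> \<Omega>"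
    and der: "((\<lambda>t. F ((1 - t) *\<^sub>R x + t *\<^sub>R y)) has_real_derivative D) (at 0)"
  shows "0 \<le> D"
proof (rule ccontr)
  assume "\<not> 0 \<le> D"
  then obtain d where "0 < d" and dec: "\<And>t. 0 < t \<Longrightarrow> t < d \<Longrightarrow> F ((1 - t) *\<^sub>R x + t *\<^sub>R y) < F x"
    using DERIV_neg_dec_right[OF der] by auto
  define t where "t = min (d / 2) 1"
  have "(1 - t) *\<^sub>R x + t *\<^sub>R y \<in> \<Omega>"
    using x_min \<open>convex \<Omega>\<close> \<open>y \<in> \<Omega>\<close> \<open>0 < d\<close>
    by (intro convexD_alt) (auto simp: is_argmin_def t_def)
  with x_min have "F x \<le> F ((1 - t) *\<^sub>R x + t *\<^sub>R y)" by (auto simp: is_argmin_def)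
  moreover have "F ((1 - t) *\<^sub>R x + t *\<^sub>R y) < F x" using \<open>0 < d\<close> by (intro dec) (auto simp: t_def)
  ultimately show False by simp
qed

definition objF_grad :: "(real^'d) \<Rightarrow> (real^'d) \<Rightarrow> (real \<Rightarrow> real) \<Rightarrow> real \<Rightarrow> (real^'d) \<Rightarrow> real^'d" where
  "objF_grad L \<gamma> \<psi>' C p = (\<chi> i. L$i + \<gamma>$i * \<psi>' (p$i) - C / p$i)"

lemma objF_eq_sum:
  "objF L \<gamma> \<psi> C p = (\<Sum>i\<in>UNIV. p$i * L$i + \<gamma>$i * \<psi> (p$i) - C * ln (p$i))"
  by (simp add: objF_def reg_phi_def log_barrier_def sum.distrib sum_subtractf sum_distrib_left sum_negf)

lemma objF_segment_has_real_derivative: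
  assumes x_pos: "\<And>i. 0 < x$i"
    and \<psi>_deriv: "\<And>t. 0 < t \<Longrightarrow> (\<psi> has_real_derivative \<psi>' t) (at t)"
  shows "((\<lambda>t. objF L \<gamma> \<psi> C ((1 - t) *\<^sub>R x + t *\<^sub>R y)) has_real_derivative
           objF_grad L \<gamma> \<psi>' C x \<bullet> (y - x)) (at 0)"
proof -
  have seg: "((1 - t) *\<^sub>R x + t *\<^sub>R y)$i = x$i + t * (y$i - x$i)" for t i
    by (simp add: algebra_simps)
  have "((\<lambda>t. (x$i + t * (y$i - x$i)) * L$i + \<gamma>$i * \<psi> (x$i + t * (y$i - x$i))
                - C * ln (x$i + t * (y$i - x$i)))
        has_real_derivative (L$i + \<gamma>$i * \<psi>' (x$i) - C / x$i) * (y$i - x$i)) (at 0)" for i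
  proof -
    have pos: "0 < x$i + 0 * (y$i - x$i)" using x_pos by simp
    have lin: "((\<lambda>t. x$i + t * (y$i - x$i)) has_real_derivative y$i - x$i) (at 0)"
      by (auto intro!: derivative_eq_intros)
    from DERIV_chain2[OF \<psi>_deriv[OF pos] lin] lin
    show ?thesis
      using x_pos[of i] by (auto intro!: derivative_eq_intros simp: field_simps)
  qed
  then show ?thesis
    unfolding objF_eq_sum seg objF_grad_def inner_vec_def
    by (auto intro!: DERIV_sum)
qed

lemma objF_above_tangent:
  assumes x_pos: "\<And>i. 0 < x$i" and y_pos: "\<And>i. 0 < y$i"
    and \<gamma>_nonneg: "\<And>i. 0 \<le> \<gamma>$i"
    and \<psi>_convex: "convex_on {0<..} \<psi>"
    and \<psi>_deriv: "\<And>t. 0 < t \<Longrightarrow> (\<psi> has_real_derivative \<psi>' t) (at t)"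
  shows "objF L \<gamma> \<psi> C x + objF_grad L \<gamma> \<psi>' C x \<bullet> (y - x)
           + C * (\<Sum>i\<in>UNIV. y$i / x$i - 1 - ln (y$i / x$i))
         \<le> objF L \<gamma> \<psi> C y"
proof -
  have "x$i * L$i + \<gamma>$i * \<psi> (x$i) - C * ln (x$i)
          + (L$i + \<gamma>$i * \<psi>' (x$i) - C / x$i) * (y$i - x$i)
          + C * (y$i / x$i - 1 - ln (y$i / x$i))
        \<le> y$i * L$i + \<gamma>$i * \<psi> (y$i) - C * ln (y$i)" for i
  proof -
    have xi: "0 < x$i" and yi: "0 < y$i" using x_pos y_pos by auto
    have "\<psi>' (x$i) * (y$i - x$i) \<le> \<psi> (y$i) - \<psi> (x$i)"
    proof (rule convex_on_imp_above_tangent[OF \<psi>_convex])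
      show "(\<psi> has_field_derivative \<psi>' (x$i)) (at (x$i) within {0<..})"
        using \<psi>_deriv[OF xi] by (rule has_field_derivative_at_within)
    qed (use xi yi in \<open>auto simp: interior_open\<close>)
    then have "\<gamma>$i * (\<psi>' (x$i) * (y$i - x$i)) \<le> \<gamma>$i * (\<psi> (y$i) - \<psi> (x$i))"
      using \<gamma>_nonneg by (intro mult_left_mono) auto
    moreover have "- C * ln (x$i) - C / x$i * (y$i - x$i) + C * (y$i / x$i - 1 - ln (y$i / x$i))
                   = - C * ln (y$i)"
      using xi yi by (simp add: ln_div field_simps)
    moreover have "(L$i + \<gamma>$i * \<psi>' (x$i) - C / x$i) * (y$i - x$i)
                   = L$i * (y$i - x$i) + \<gamma>$i * (\<psi>' (x$i) * (y$i - x$i)) - C / x$i * (y$i - x$i)"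
      by (simp add: algebra_simps)
    ultimately show ?thesis
      by (simp add: algebra_simps)
  qed
  then show ?thesis
    unfolding objF_eq_sum objF_grad_def inner_vec_def
    by (simp add: sum_distrib_left sum.distrib[symmetric] sum_mono)
qed

theorem lemma29:
  fixes C :: real
    and \<gamma> \<gamma>' L L' :: "real^'d"
    and \<psi> \<psi>1 \<psi>2 :: "real \<Rightarrow> real"
    and \<Omega> :: "(real^'d) set"
    and x y :: "real^'d"
  assumes C_pos: "C > 0"
    and \<gamma>_pos: "\<And>i. \<gamma>$i > 0" and \<gamma>'_pos: "\<And>i. \<gamma>'$i > 0"
    and \<gamma>_le: "\<And>i. \<gamma>'$i \<ge> \<gamma>$i"
    and L_pos: "\<And>i. L$i > 0" and L'_pos: "\<And>i. L'$i > 0"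
    and d1: "\<And>t. t > 0 \<Longrightarrow> (\<psi> has_real_derivative \<psi>1 t) (at t)"
    and d2: "\<And>t. t > 0 \<Longrightarrow> (\<psi>1 has_real_derivative \<psi>2 t) (at t)"
    and cvx: "convex_on {0<..} \<psi>"
    and stab: "\<And>t z. t > 0 \<Longrightarrow> t / 2 \<le> z \<Longrightarrow> z \<le> 2 * t \<Longrightarrow>
                 \<psi>2 t / 4 \<le> \<psi>2 z \<and> \<psi>2 z \<le> 4 * \<psi>2 t"
    and \<Omega>_pos: "\<Omega> \<subseteq> {p. \<forall>i. p$i > 0}"
    and \<Omega>_cvx: "convex \<Omega>"
    and x_min: "is_argmin (objF L \<gamma> \<psi> C) \<Omega> x"
    and y_min: "is_argmin (objF L' \<gamma>' \<psi> C) \<Omega> y"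
    and C_big: "C \<ge> Max {9, 32 * (\<Sum>i\<in>UNIV. (L'$i - L$i)^2 * (x$i)^2),
                              32 * (\<Sum>i\<in>UNIV. (\<gamma>'$i - \<gamma>$i)^2 * (\<psi>1 (x$i))^2 * (x$i)^2)}"
  shows "\<forall>i. x$i / 2 \<le> y$i \<and> y$i \<le> 2 * x$i"
proof -
  have x_in: "x \<in> \<Omega>" and y_in: "y \<in> \<Omega>"
    and y_le_x: "objF L' \<gamma>' \<psi> C y \<le> objF L' \<gamma>' \<psi> C x"
    using x_min y_min by (auto simp: is_argmin_def)
  have x_pos: "\<And>i. 0 < x$i" and y_pos: "\<And>i. 0 < y$i"
    using x_in y_in \<Omega>_pos by auto
  define r where "r i = y$i / x$i" for i
  define a where "a i = ((L'$i - L$i) + (\<gamma>'$i - \<gamma>$i) * \<psi>1 (x$i)) * x$i" for i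
  have "0 \<le> objF_grad L \<gamma> \<psi>1 C x \<bullet> (y - x)"
    using x_min \<Omega>_cvx y_in objF_segment_has_real_derivative[OF x_pos d1]
    by (rule is_argmin_convex_imp_deriv_nonneg)
  moreover have "objF L' \<gamma>' \<psi> C x + objF_grad L' \<gamma>' \<psi>1 C x \<bullet> (y - x)
                   + C * (\<Sum>i\<in>UNIV. r i - 1 - ln (r i)) \<le> objF L' \<gamma>' \<psi> C y"
    unfolding r_def using x_pos y_pos \<gamma>'_pos cvx d1
    by (intro objF_above_tangent) (auto simp: less_imp_le)
  moreover have "(objF_grad L' \<gamma>' \<psi>1 C x - objF_grad L \<gamma> \<psi>1 C x) \<bullet> (y - x)
                   = (\<Sum>i\<in>UNIV. a i * (r i - 1))"
    unfolding objF_grad_def inner_vec_def a_def r_def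
    using x_pos by (intro sum.cong refl) (simp add: field_simps less_imp_neq[symmetric])
  ultimately have gap: "C * (\<Sum>i\<in>UNIV. r i - 1 - ln (r i)) \<le> - (\<Sum>i\<in>UNIV. a i * (r i - 1))"
    using y_le_x by (simp add: inner_diff_left)
  have "8 * (\<Sum>i\<in>UNIV. (a i)^2) \<le> C"
    using sum_power2_add_le[of "\<lambda>i. (L'$i - L$i) * x$i" "\<lambda>i. (\<gamma>'$i - \<gamma>$i) * \<psi>1 (x$i) * x$i" UNIV] C_big
    by (simp add: a_def distrib_right power_mult_distrib)
  have r_near_one: "\<bar>r i - 1\<bar> \<le> 1/2" for i
    using C_big by (intro ratios_near_one_of_log_gap_bound[OF _ _ \<open>8 * _ \<le> C\<close> gap])
      (auto simp: r_def x_pos y_pos)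
  show ?thesis
  proof
    fix i
    show "x$i / 2 \<le> y$i \<and> y$i \<le> 2 * x$i"
      using r_near_one[of i] x_pos[of i] unfolding r_def abs_le_iff by (auto simp: field_simps)
  qed
qed

end
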